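(* Let $p$ be an odd prime, $\omega=e^{2\pi i/p}$, $m\ge1$, $Q=T_{(p^m)}$ and $K=K_Q(p)$. Let $M=S_\xi X^b$ and $M'=S_{\xi'}X^{b'}$ be elements of $K$ (with $S_\xi,S_{\xi'}\in Q$, $b,b'\in\mathbb{Z}_p$) such that $[M,M']=\omega^c\mathbbm{1}$ for some $c\in\mathbb{Z}_p$. Then: (1) if $b=b'=0$, then $c=0$; (2) if $b\neq0$, then $M'=S_{\chi'}M^{b'/b}$ where $\chi'(q)=\omega^{\alpha'_0+\alpha'_1q}$ for some $\alpha'_0,\alpha'_1\in\mathbb{Z}_p$, and $c=-b\alpha'_1$; (3) if $b'\neq0$, then $M=S_\chi M'^{\,b/b'}$ where $\chi(q)=\omega^{\alpha_0+\alpha_1q}$ for some $\alpha_0,\alpha_1\in\mathbb{Z}_p$, and $c=b'\alpha_1$.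
   Context: Let $\{|q\rangle:q\in\mathbb{Z}_p\}$ be the computational basis of $\mathbb{C}^p$ and $X|q\rangle=|q+1\rangle$. For $\xi:\mathbb{Z}_p\to U(1)$ let $S_\xi=\mathrm{diag}(\xi(0),\dots,\xi(p-1))$. $T=\{S_\xi:\prod_{q}\xi(q)=1\}$ and $T_{(p^k)}=\{S\in T:S^{p^k}=\mathbbm{1}\}$. $K_Q(p)$ is the subgroup of $SU(p)$ generated by all $S_\xi X^b$ with $S_\xi\in Q$, $b\in\mathbb{Z}_p$. The commutator is $[A,B]=ABA^{-1}B^{-1}$. For $b\neq 0$, $b'/b$ denotes $b'b^{-1}\in\mathbb{Z}_p$, used as an exponent via a representative in $\{0,\dots,p-1\}$. *)

theory Defs
  imports "Jordan_Normal_Form.Matrix" "HOL-Number_Theory.Cong"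
begin

text \<open>Operators on C^p are p x p complex matrices; the basis vector |q> is the
 q-th standard basis vector, q in {0..<p} representing Z_p.\<close>

definition omega :: "nat \<Rightarrow> complex" where
  "omega p = cis (2 * pi / real p)"

definition Xmat :: "nat \<Rightarrow> complex mat" where
  "Xmat p = mat p p (\<lambda>(i, j). if i = (j + 1) mod p then 1 else 0)"

definition Smat :: "nat \<Rightarrow> (nat \<Rightarrow> complex) \<Rightarrow> complex mat" where
  "Smat p \<xi> = mat p p (\<lambda>(i, j). if i = j then \<xi> i else 0)"

definition U1fun :: "nat \<Rightarrow> (nat \<Rightarrow> complex) \<Rightarrow> bool" where
  "U1fun p \<xi> \<longleftrightarrow> (\<forall>q<p. cmod (\<xi> q) = 1)"

definition T_set :: "nat \<Rightarrow> complex mat set" where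
  "T_set p = {Smat p \<xi> | \<xi>. U1fun p \<xi> \<and> (\<Prod>q<p. \<xi> q) = 1}"

definition T_tors :: "nat \<Rightarrow> nat \<Rightarrow> complex mat set" where
  "T_tors p k = {S \<in> T_set p. S ^\<^sub>m k = 1\<^sub>m p}"

definition minv :: "nat \<Rightarrow> complex mat \<Rightarrow> complex mat" where
  "minv p A = (SOME B. B \<in> carrier_mat p p \<and> A * B = 1\<^sub>m p \<and> B * A = 1\<^sub>m p)"

definition commutator :: "nat \<Rightarrow> complex mat \<Rightarrow> complex mat \<Rightarrow> complex mat" where
  "commutator p A B = A * B * minv p A * minv p B"

inductive_set K_grp :: "nat \<Rightarrow> complex mat set \<Rightarrow> complex mat set" for p Q where
  gen: "\<lbrakk>Smat p \<xi> \<in> Q; b < p\<rbrakk> \<Longrightarrow> Smat p \<xi> * Xmat p ^\<^sub>m b \<in> K_grp p Q"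
| one: "1\<^sub>m p \<in> K_grp p Q"
| mult: "\<lbrakk>A \<in> K_grp p Q; B \<in> K_grp p Q\<rbrakk> \<Longrightarrow> A * B \<in> K_grp p Q"
| inv: "A \<in> K_grp p Q \<Longrightarrow> minv p A \<in> K_grp p Q"

definition zinv :: "nat \<Rightarrow> nat \<Rightarrow> nat" where
  "zinv p b = (SOME x. x < p \<and> [b * x = 1] (mod p))"

definition zdiv :: "nat \<Rightarrow> nat \<Rightarrow> nat \<Rightarrow> nat" where
  "zdiv p b' b = (b' * zinv p b) mod p"

end

theory Submission
  imports Defs "Jordan_Normal_Form.Determinant"
begin

text \<open>Every S_xi X^b is a monomial matrix. If b \<noteq> 0 and k = b'/b, then M^k has the same
  shift as M', so M' = S_chi M^k with chi = xi' / eta, eta being the coefficients of M^k. Since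
  M commutes with M^k, the relation M M' = omega^c M' M only constrains chi, and says that
  chi(q + b) = omega^-c chi(q). As b generates Z_p, chi is determined by chi(0) and is a linear
  phase, while chi(0) is a p-th root of unity because the coefficients of M' and M^k both have
  product 1 and, p being odd, p divides 0 + 1 + ... + (p - 1). Case (3) is case (2) with M and
  M' exchanged, and case (1) compares one diagonal entry. Of the elements of T only their nonzero
  coefficients with product 1 are used.\<close>

definition zsub :: "nat \<Rightarrow> nat \<Rightarrow> nat \<Rightarrow> nat" where
  "zsub p i b = (i + (p - b mod p)) mod p"

lemma zsub_less: "0 < p \<Longrightarrow> zsub p i b < p"
  by (simp add: zsub_def)

lemma zsub_0: "i < p \<Longrightarrow> zsub p i 0 = i"
  by (simp add: zsub_def)

lemma zsub_add_mod:
  assumes "i < p" shows "(zsub p i b + b) mod p = i"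
proof -
  have "b mod p < p" using assms by simp
  have "(zsub p i b + b) mod p = (i + (p - b mod p) + b mod p) mod p"
    unfolding zsub_def by (simp add: mod_add_left_eq mod_add_right_eq)
  also have "\<dots> = (i + p) mod p" using \<open>b mod p < p\<close> by simp
  finally show ?thesis using assms by simp
qed

lemma zsub_mod_add:
  assumes "q < p" shows "zsub p ((q + b) mod p) b = q"
proof -
  have "b mod p < p" using assms by simp
  have "zsub p ((q + b) mod p) b = (q + b mod p + (p - b mod p)) mod p"
    unfolding zsub_def by (metis mod_add_left_eq mod_add_right_eq)
  also have "\<dots> = (q + p) mod p" using \<open>b mod p < p\<close> by simp
  finally show ?thesis using assms by simp
qed

lemma prod_zsub: "(\<Prod>i<p. f (zsub p i b)) = (\<Prod>i<p. f i)"
  by (rule prod.reindex_bij_witness[where i = "\<lambda>i. (i + b) mod p" and j = "\<lambda>i. zsub p i b"])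
     (auto simp: zsub_less zsub_add_mod zsub_mod_add)

lemma odd_dvd_sum_lessThan:
  fixes p :: nat
  assumes "odd p" shows "p dvd (\<Sum>j<p. j)"
proof -
  obtain k where k: "p = 2 * k + 1" using assms oddE by blast
  have "(\<Sum>j<p. j) = p * k"
    unfolding lessThan_atLeast0 Sum_Ico_nat by (simp add: k algebra_simps)
  then show ?thesis by simp
qed

lemma bij_betw_mult_mod:
  fixes b p :: nat
  assumes "coprime b p" shows "bij_betw (\<lambda>j. j * b mod p) {..<p} {..<p}"
proof (rule bij_betw_imageI)
  show "inj_on (\<lambda>j. j * b mod p) {..<p}"
  proof (rule inj_onI)
    fix j j' assume "j \<in> {..<p}" "j' \<in> {..<p}" "j * b mod p = j' * b mod p"
    then have "[j = j'] (mod p)" using cong_mult_rcancel_nat[OF assms] by (simp add: cong_def)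
    then show "j = j'"
      using \<open>j \<in> {..<p}\<close> \<open>j' \<in> {..<p}\<close> by (simp add: cong_less_modulus_unique_nat)
  qed
  then show "(\<lambda>j. j * b mod p) ` {..<p} = {..<p}"
    by (intro endo_inj_surj) auto
qed

lemma zinv_cong:
  assumes "coprime b p" "0 < p" shows "[b * zinv p b = 1] (mod p)"
proof -
  obtain x where "[b * x = 1] (mod p)" using cong_solve_coprime_nat[OF assms(1)] by auto
  then have "x mod p < p \<and> [b * (x mod p) = 1] (mod p)"
    using assms(2) by (simp add: cong_def mod_mult_right_eq)
  then show ?thesis unfolding zinv_def by (rule someI2) simp
qed

lemma zdiv_mult_cong:
  assumes "coprime b p" "0 < p" shows "[zdiv p b' b * b = b'] (mod p)"
proof -
  have "[zdiv p b' b * b = b' * (b * zinv p b)] (mod p)"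
    unfolding zdiv_def cong_def by (simp add: mod_mult_left_eq mod_mult_right_eq ac_simps)
  also have "[b' * (b * zinv p b) = b' * 1] (mod p)"
    by (rule cong_scalar_left[OF zinv_cong[OF assms]])
  finally show ?thesis by simp
qed

lemma omega_pow: "0 < p \<Longrightarrow> omega p ^ k = cis (2 * pi * real k / real p)"
  by (simp add: omega_def DeMoivre field_simps)

lemma omega_pow_eq_iff:
  assumes "0 < p" shows "omega p ^ x = omega p ^ y \<longleftrightarrow> [x = y] (mod p)"
proof -
  have "omega p ^ p = 1" using assms by (simp add: omega_pow)
  then have mod: "omega p ^ n = omega p ^ (n mod p)" for n
    by (metis (no_types) div_mult_mod_eq mult.commute power_add power_mult power_one mult_1)
  have "inj_on (\<lambda>k. omega p ^ k) {..<p}"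
    using bij_betw_roots_unity[OF assms] by (simp add: bij_betw_def omega_pow[OF assms])
  then have "omega p ^ (x mod p) = omega p ^ (y mod p) \<longleftrightarrow> x mod p = y mod p"
    using assms by (auto dest: inj_onD)
  then show ?thesis by (simp add: mod[of x] mod[of y] cong_def)
qed

lemma root_of_unity_eq_omega_pow:
  assumes "0 < p" "z ^ p = 1" shows "\<exists>a<p. z = omega p ^ a"
  using bij_betw_roots_unity[OF assms(1)] assms(2)
  by (auto simp: bij_betw_def omega_pow[OF assms(1)])

lemma shift_eigenfunction_linear_phase:
  fixes \<chi> :: "nat \<Rightarrow> complex" and b p :: nat
  assumes "odd p" "coprime b p"
    and shift: "\<And>q. q < p \<Longrightarrow> \<chi> ((q + b) mod p) = u * \<chi> q"
    and prod: "(\<Prod>q<p. \<chi> q) = 1"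
  shows "\<exists>a0<p. \<exists>a1<p. \<forall>q<p. \<chi> q = omega p ^ (a0 + a1 * q)"
proof -
  have p: "0 < p" using \<open>odd p\<close> by (simp add: odd_pos)
  have orbit: "\<chi> (j * b mod p) = u ^ j * \<chi> 0" for j
  proof (induction j)
    case (Suc j)
    have "Suc j * b mod p = (j * b mod p + b) mod p" by (simp add: mod_add_right_eq add.commute)
    then show ?case using shift[of "j * b mod p"] p Suc.IH by simp
  qed simp
  have "\<chi> 0 \<noteq> 0" using prod p by (metis finite_lessThan lessThan_iff prod_zero_iff zero_neq_one)
  moreover have "\<chi> 0 = u ^ p * \<chi> 0" using orbit[of p] by simp
  ultimately have u_root: "u ^ p = 1" by simp
  have "(\<Prod>q<p. \<chi> q) = (\<Prod>j<p. \<chi> (j * b mod p))"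
    using prod.reindex_bij_betw[OF bij_betw_mult_mod[OF \<open>coprime b p\<close>], of \<chi>] by simp
  also have "\<dots> = u ^ (\<Sum>j<p. j) * \<chi> 0 ^ p"
    by (simp add: orbit prod.distrib power_sum)
  also have "u ^ (\<Sum>j<p. j) = 1"
    using odd_dvd_sum_lessThan[OF \<open>odd p\<close>] u_root by (auto elim!: dvdE simp: power_mult)
  finally have "\<chi> 0 ^ p = 1" using prod by simp
  then obtain a0 where a0: "a0 < p" "\<chi> 0 = omega p ^ a0"
    using root_of_unity_eq_omega_pow[OF p] by blast
  obtain s where s: "u = omega p ^ s" using root_of_unity_eq_omega_pow[OF p u_root] by blast
  obtain x where x: "[b * x = 1] (mod p)" using cong_solve_coprime_nat[OF \<open>coprime b p\<close>] by auto
  define a1 where "a1 = s * x mod p"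
  have "\<chi> q = omega p ^ (a0 + a1 * q)" if "q < p" for q
  proof -
    have "q \<in> (\<lambda>j. j * b mod p) ` {..<p}"
      using bij_betw_imp_surj_on[OF bij_betw_mult_mod[OF \<open>coprime b p\<close>]] \<open>q < p\<close> by simp
    then obtain j where q: "q = j * b mod p" by blast
    have "[a1 * q = s * x * (j * b)] (mod p)"
      unfolding a1_def q cong_def by (rule mod_mult_eq)
    also have "s * x * (j * b) = s * j * (b * x)" by (simp add: ac_simps)
    also have "[\<dots> = s * j * 1] (mod p)" by (rule cong_scalar_left[OF x])
    finally have "omega p ^ (a1 * q) = u ^ j"
      using p by (simp add: s omega_pow_eq_iff flip: power_mult)
    then show ?thesis using orbit[of j] a0 by (simp add: q power_add)
  qed
  moreover have "a1 < p" using p by (simp add: a1_def)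
  ultimately show ?thesis using a0(1) by blast
qed

text \<open>The coefficient is indexed by the row, so that left multiplication by a diagonal matrix
  acts pointwise on it.\<close>

definition monomial_mat :: "nat \<Rightarrow> (nat \<Rightarrow> 'a :: zero) \<Rightarrow> nat \<Rightarrow> 'a mat" where
  "monomial_mat p f b = mat p p (\<lambda>(i, j). if i = (j + b) mod p then f i else 0)"

lemma monomial_mat_carrier [simp]: "monomial_mat p f b \<in> carrier_mat p p"
  and dim_row_monomial_mat [simp]: "dim_row (monomial_mat p f b) = p"
  and dim_col_monomial_mat [simp]: "dim_col (monomial_mat p f b) = p"
  by (simp_all add: monomial_mat_def)

lemma monomial_mat_cong:
  assumes "\<And>i. i < p \<Longrightarrow> f i = g i" "[b = d] (mod p)"
  shows "monomial_mat p f b = monomial_mat p g d"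
proof -
  have "(j + b) mod p = (j + d) mod p" for j
    using assms(2) by (metis cong_def mod_add_right_eq)
  then show ?thesis by (intro eq_matI) (auto simp: monomial_mat_def assms(1))
qed

lemma monomial_mat_eq_iff:
  "monomial_mat p f b = monomial_mat p g b \<longleftrightarrow> (\<forall>i<p. f i = g i)"
proof
  assume eq: "monomial_mat p f b = monomial_mat p g b"
  show "\<forall>i<p. f i = g i"
  proof (intro allI impI)
    fix i assume "i < p"
    then have "monomial_mat p f b $$ (i, zsub p i b) = monomial_mat p g b $$ (i, zsub p i b)"
      by (simp only: eq)
    then show "f i = g i" using \<open>i < p\<close> by (simp add: monomial_mat_def zsub_less zsub_add_mod)
  qed
qed (simp add: monomial_mat_cong)

lemma monomial_mat_mult:
  fixes f g :: "nat \<Rightarrow> 'a :: semiring_0"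
  shows "monomial_mat p f b * monomial_mat p g d = monomial_mat p (\<lambda>i. f i * g (zsub p i b)) (b + d)"
proof (rule eq_matI)
  fix i j assume "i < dim_row (monomial_mat p (\<lambda>i. f i * g (zsub p i b)) (b + d))"
    "j < dim_col (monomial_mat p (\<lambda>i. f i * g (zsub p i b)) (b + d))"
  then have i: "i < p" and j: "j < p" by (simp_all add: monomial_mat_def)
  define x where "x = (j + d) mod p"
  have x: "x < p" using j by (simp add: x_def)
  have "(monomial_mat p f b * monomial_mat p g d) $$ (i, j)
      = (\<Sum>k<p. (if i = (k + b) mod p then f i else 0) * (if k = x then g k else 0))"
    using i j by (simp add: monomial_mat_def scalar_prod_def x_def lessThan_atLeast0)
  also have "\<dots> = (\<Sum>k<p. if k = x then (if i = (x + b) mod p then f i * g x else 0) else 0)"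
    by (intro sum.cong) auto
  also have "\<dots> = (if i = (x + b) mod p then f i * g x else 0)"
    using x by simp
  also have "\<dots> = monomial_mat p (\<lambda>i. f i * g (zsub p i b)) (b + d) $$ (i, j)"
  proof -
    have "(x + b) mod p = (j + (b + d)) mod p"
      unfolding x_def by (simp add: mod_add_left_eq mod_add_right_eq ac_simps)
    then show ?thesis using i j zsub_mod_add[OF x, of b] by (auto simp: monomial_mat_def)
  qed
  finally show "(monomial_mat p f b * monomial_mat p g d) $$ (i, j)
      = monomial_mat p (\<lambda>i. f i * g (zsub p i b)) (b + d) $$ (i, j)" .
qed (simp_all add: monomial_mat_def)

lemma smult_monomial_mat:
  fixes f :: "nat \<Rightarrow> 'a :: mult_zero"
  shows "a \<cdot>\<^sub>m monomial_mat p f b = monomial_mat p (\<lambda>i. a * f i) b"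
  by (rule eq_matI) (auto simp: monomial_mat_def)

lemma one_eq_monomial_mat: "1\<^sub>m p = monomial_mat p (\<lambda>_. 1) 0"
  by (rule eq_matI) (auto simp: monomial_mat_def)

lemma monomial_mat_pow:
  fixes f :: "nat \<Rightarrow> 'a :: comm_semiring_1"
  shows "monomial_mat p f b ^\<^sub>m n = monomial_mat p (\<lambda>i. \<Prod>k<n. f (zsub p i (k * b))) (n * b)"
proof (induction n)
  case 0
  show ?case by (simp add: one_eq_monomial_mat)
next
  case (Suc n)
  then show ?case by (simp add: monomial_mat_mult ac_simps)
qed

lemma Smat_eq_monomial_mat: "Smat p \<xi> = monomial_mat p \<xi> 0"
  by (rule eq_matI) (auto simp: monomial_mat_def Smat_def)

lemma Smat_mult_Xmat_pow: "Smat p \<xi> * Xmat p ^\<^sub>m b = monomial_mat p \<xi> b"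
proof -
  have "Xmat p = monomial_mat p (\<lambda>_. 1) 1"
    by (simp add: Xmat_def monomial_mat_def)
  then have "Xmat p ^\<^sub>m b = monomial_mat p (\<lambda>_. 1) b"
    by (simp add: monomial_mat_pow)
  then show ?thesis by (simp add: Smat_eq_monomial_mat monomial_mat_mult)
qed

lemma monomial_mat_right_inverse:
  fixes f :: "nat \<Rightarrow> 'a :: field"
  assumes "0 < p" "\<And>i. i < p \<Longrightarrow> f i \<noteq> 0"
  shows "monomial_mat p f b * monomial_mat p (\<lambda>i. 1 / f ((i + b) mod p)) ((p - 1) * b) = 1\<^sub>m p"
  unfolding monomial_mat_mult one_eq_monomial_mat
proof (rule monomial_mat_cong)
  have "b + (p - 1) * b = p * b" using assms(1) by (cases p) auto
  then show "[b + (p - 1) * b = 0] (mod p)" by (simp add: cong_def)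
qed (simp add: assms(2) zsub_add_mod)

lemma Smat_in_T_setD:
  assumes "Smat p \<xi> \<in> T_set p"
  shows "(\<forall>i<p. \<xi> i \<noteq> 0) \<and> (\<Prod>i<p. \<xi> i) = 1"
proof -
  obtain \<zeta> where eq: "Smat p \<xi> = Smat p \<zeta>" and "U1fun p \<zeta>" "(\<Prod>q<p. \<zeta> q) = 1"
    using assms unfolding T_set_def by blast
  moreover have "\<forall>i<p. \<xi> i = \<zeta> i"
    using eq by (simp add: Smat_eq_monomial_mat monomial_mat_eq_iff)
  ultimately show ?thesis by (auto simp: U1fun_def)
qed

lemma pow_mat_Suc_left:
  assumes "A \<in> carrier_mat n n" shows "A ^\<^sub>m Suc k = A * A ^\<^sub>m k"
proof (induction k)
  case 0
  show ?case using assms by simp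
next
  case (Suc k)
  have "A ^\<^sub>m Suc (Suc k) = A ^\<^sub>m Suc k * A" by simp
  also have "\<dots> = A * A ^\<^sub>m k * A" by (simp only: Suc)
  also have "\<dots> = A * A ^\<^sub>m Suc k"
    using assms by (simp add: assoc_mult_mat[of A n n "A ^\<^sub>m k" n A n])
  finally show ?case .
qed

lemma minv_left_inverse:
  assumes "A \<in> carrier_mat n n" "B \<in> carrier_mat n n" "A * B = 1\<^sub>m n"
  shows "minv n A \<in> carrier_mat n n \<and> minv n A * A = 1\<^sub>m n"
proof -
  have "B * A = 1\<^sub>m n" using mat_mult_left_right_inverse assms by blast
  then have "\<exists>B. B \<in> carrier_mat n n \<and> A * B = 1\<^sub>m n \<and> B * A = 1\<^sub>m n"
    using assms by blast
  then show ?thesis unfolding minv_def by (rule someI2_ex) blast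
qed

lemma commutator_eq_smult_oneD:
  assumes A: "A \<in> carrier_mat n n" "A' \<in> carrier_mat n n" "A * A' = 1\<^sub>m n"
    and B: "B \<in> carrier_mat n n" "B' \<in> carrier_mat n n" "B * B' = 1\<^sub>m n"
    and comm: "commutator n A B = s \<cdot>\<^sub>m 1\<^sub>m n"
  shows "A * B = s \<cdot>\<^sub>m (B * A)"
proof -
  have iA: "minv n A \<in> carrier_mat n n" "minv n A * A = 1\<^sub>m n" using minv_left_inverse[OF A] by auto
  have iB: "minv n B \<in> carrier_mat n n" "minv n B * B = 1\<^sub>m n" using minv_left_inverse[OF B] by auto
  have "commutator n A B * (B * A) = A * B * minv n A * (minv n B * (B * A))"
    unfolding commutator_def using A(1) B(1) iA(1) iB(1) by (intro assoc_mult_mat) auto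
  also have "minv n B * (B * A) = A"
    using A(1) B(1) iB by (simp flip: assoc_mult_mat[of "minv n B" n n B n A n])
  also have "A * B * minv n A * A = A * B * (minv n A * A)"
    using A(1) B(1) iA(1) by (intro assoc_mult_mat) auto
  also have "\<dots> = A * B"
    using A(1) B(1) iA(2) by simp
  finally have "commutator n A B * (B * A) = A * B" .
  moreover have "(s \<cdot>\<^sub>m 1\<^sub>m n) * (B * A) = s \<cdot>\<^sub>m (B * A)"
    using A(1) B(1) by (subst mult_smult_assoc_mat) auto
  ultimately show ?thesis by (simp add: comm)
qed

lemma phase_commutation_shifts_diagonal:
  fixes \<xi> \<chi> :: "nat \<Rightarrow> complex"
  assumes p: "0 < p" and \<xi>_nz: "\<And>i. i < p \<Longrightarrow> \<xi> i \<noteq> 0"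
    and comm: "u \<cdot>\<^sub>m (monomial_mat p \<xi> b * (Smat p \<chi> * monomial_mat p \<xi> b ^\<^sub>m k))
      = v \<cdot>\<^sub>m (Smat p \<chi> * monomial_mat p \<xi> b ^\<^sub>m k * monomial_mat p \<xi> b)"
    and "i < p"
  shows "u * \<chi> (zsub p i b) = v * \<chi> i"
proof -
  define N where "N = monomial_mat p \<xi> b"
  define \<eta> where "\<eta> = (\<lambda>i. \<Prod>j<Suc k. \<xi> (zsub p i (j * b)))"
  have N: "N \<in> carrier_mat p p" by (simp add: N_def)
  have S: "Smat p \<chi> \<in> carrier_mat p p" "Smat p (\<lambda>i. \<chi> (zsub p i b)) \<in> carrier_mat p p"
    by (simp_all add: Smat_eq_monomial_mat)
  have twist: "N * Smat p \<chi> = Smat p (\<lambda>i. \<chi> (zsub p i b)) * N"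
    unfolding N_def Smat_eq_monomial_mat monomial_mat_mult
    by (rule monomial_mat_cong) (simp_all add: zsub_0 zsub_less p)
  have "N * (Smat p \<chi> * N ^\<^sub>m k) = N * Smat p \<chi> * N ^\<^sub>m k"
    using N S by (simp add: assoc_mult_mat[of N p p _ p "N ^\<^sub>m k" p])
  also have "\<dots> = Smat p (\<lambda>i. \<chi> (zsub p i b)) * N ^\<^sub>m Suc k"
    unfolding twist pow_mat_Suc_left[OF N] using N S by (simp add: assoc_mult_mat[of _ p p N p "N ^\<^sub>m k" p])
  finally have "N * (Smat p \<chi> * N ^\<^sub>m k) = Smat p (\<lambda>i. \<chi> (zsub p i b)) * N ^\<^sub>m Suc k" .
  moreover have "Smat p \<chi> * N ^\<^sub>m k * N = Smat p \<chi> * N ^\<^sub>m Suc k"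
    using N S by (simp add: assoc_mult_mat[of _ p p "N ^\<^sub>m k" p N p])
  ultimately have "u \<cdot>\<^sub>m (Smat p (\<lambda>i. \<chi> (zsub p i b)) * N ^\<^sub>m Suc k)
      = v \<cdot>\<^sub>m (Smat p \<chi> * N ^\<^sub>m Suc k)"
    using comm by (simp only: N_def)
  then have "monomial_mat p (\<lambda>i. u * (\<chi> (zsub p i b) * \<eta> (zsub p i 0))) (0 + Suc k * b)
      = monomial_mat p (\<lambda>i. v * (\<chi> i * \<eta> (zsub p i 0))) (0 + Suc k * b)"
    by (simp only: N_def \<eta>_def monomial_mat_pow Smat_eq_monomial_mat monomial_mat_mult smult_monomial_mat)
  moreover have "\<eta> i \<noteq> 0" using \<xi>_nz p by (simp add: \<eta>_def zsub_less)
  ultimately show ?thesis using \<open>i < p\<close> by (auto simp: monomial_mat_eq_iff zsub_0)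
qed

text \<open>Phases on both sides keep the relation symmetric in the two matrices and free of
  negative exponents.\<close>

lemma phase_commuting_monomial_factor:
  fixes \<xi> \<xi>' :: "nat \<Rightarrow> complex" and b b' d e p :: nat
  assumes "odd p" "coprime b p"
    and \<xi>_nz: "\<And>i. i < p \<Longrightarrow> \<xi> i \<noteq> 0" and \<xi>_prod: "(\<Prod>i<p. \<xi> i) = 1"
    and \<xi>'_prod: "(\<Prod>i<p. \<xi>' i) = 1"
    and comm: "omega p ^ d \<cdot>\<^sub>m (monomial_mat p \<xi> b * monomial_mat p \<xi>' b')
      = omega p ^ e \<cdot>\<^sub>m (monomial_mat p \<xi>' b' * monomial_mat p \<xi> b)"
  shows "\<exists>a0<p. \<exists>a1<p.
    monomial_mat p \<xi>' b' = Smat p (\<lambda>q. omega p ^ (a0 + a1 * q)) * monomial_mat p \<xi> b ^\<^sub>m zdiv p b' b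
    \<and> [int b * int a1 = int d - int e] (mod int p)"
proof -
  have p: "0 < p" using \<open>odd p\<close> by (simp add: odd_pos)
  define k where "k = zdiv p b' b"
  define \<eta> where "\<eta> = (\<lambda>i. \<Prod>j<k. \<xi> (zsub p i (j * b)))"
  define \<chi> where "\<chi> i = \<xi>' i / \<eta> i" for i
  have \<eta>_nz: "\<eta> i \<noteq> 0" if "i < p" for i
    using \<xi>_nz p that by (simp add: \<eta>_def zsub_less)
  have M': "monomial_mat p \<xi>' b' = Smat p \<chi> * monomial_mat p \<xi> b ^\<^sub>m k"
    unfolding Smat_eq_monomial_mat monomial_mat_pow monomial_mat_mult \<eta>_def[symmetric]
  proof (rule monomial_mat_cong)
    show "[b' = 0 + k * b] (mod p)"
      using zdiv_mult_cong[OF \<open>coprime b p\<close> p] by (simp add: k_def cong_sym)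
  qed (simp add: \<chi>_def \<eta>_nz zsub_0)
  have shift_rel: "omega p ^ d * \<chi> (zsub p i b) = omega p ^ e * \<chi> i" if "i < p" for i
    by (rule phase_commutation_shifts_diagonal[OF p \<xi>_nz comm[unfolded M'] that])
  have shift: "\<chi> ((q + b) mod p) = omega p ^ d / omega p ^ e * \<chi> q" if "q < p" for q
  proof -
    have "omega p ^ e * \<chi> ((q + b) mod p) = omega p ^ d * \<chi> q"
      using shift_rel[of "(q + b) mod p"] p by (simp add: zsub_mod_add[OF that])
    moreover have "omega p \<noteq> 0" by (simp add: omega_def)
    ultimately show ?thesis by (simp add: field_simps)
  qed
  have "(\<Prod>i<p. \<eta> i) = 1"
    unfolding \<eta>_def by (subst prod.swap) (simp add: prod_zsub \<xi>_prod)
  then have "(\<Prod>q<p. \<chi> q) = 1"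
    using \<xi>'_prod by (simp add: \<chi>_def prod_dividef)
  then obtain a0 a1 where a: "a0 < p" "a1 < p" and \<chi>: "\<forall>q<p. \<chi> q = omega p ^ (a0 + a1 * q)"
    using shift_eigenfunction_linear_phase[where \<chi> = \<chi>, OF \<open>odd p\<close> \<open>coprime b p\<close> shift]
    by blast
  have "omega p ^ (d + a0) = omega p ^ (e + (a0 + a1 * (b mod p)))"
    using shift_rel[of "b mod p"] \<chi> p zsub_mod_add[OF p, of b] by (simp add: power_add)
  then have "[d + a0 = e + (a0 + a1 * (b mod p))] (mod p)" by (simp add: omega_pow_eq_iff p)
  also have "[e + (a0 + a1 * (b mod p)) = e + (a0 + a1 * b)] (mod p)"
    by (intro cong_add cong_refl cong_scalar_left) (simp add: cong_def)
  finally have "[int d + int a0 = int e + (int a0 + int a1 * int b)] (mod int p)"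
    by (simp flip: cong_int_iff)
  then have "[int b * int a1 = int d - int e] (mod int p)"
    by (subst cong_sym_eq) (simp add: cong_iff_dvd_diff algebra_simps)
  moreover have "Smat p \<chi> = Smat p (\<lambda>q. omega p ^ (a0 + a1 * q))"
    using \<chi> by (simp add: Smat_eq_monomial_mat monomial_mat_eq_iff)
  ultimately show ?thesis using a M' by (auto simp: k_def)
qed

lemma phase_commuting_diagonal:
  fixes \<xi> \<xi>' :: "nat \<Rightarrow> complex"
  assumes "0 < p" "c < p" "\<xi> 0 \<noteq> 0" "\<xi>' 0 \<noteq> 0"
    and "monomial_mat p \<xi> 0 * monomial_mat p \<xi>' 0
      = omega p ^ c \<cdot>\<^sub>m (monomial_mat p \<xi>' 0 * monomial_mat p \<xi> 0)"
  shows "c = 0"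
proof -
  have "\<xi> 0 * \<xi>' 0 = omega p ^ c * (\<xi>' 0 * \<xi> 0)"
    using assms(1,5) by (simp add: monomial_mat_mult smult_monomial_mat monomial_mat_eq_iff zsub_0)
  then have "omega p ^ c = omega p ^ 0" using assms(3,4) by simp
  then have "[c = 0] (mod p)" by (simp only: omega_pow_eq_iff[OF assms(1)])
  then show "c = 0" using assms(2) by (simp add: cong_def)
qed

lemma phase_commuting_second_factor:
  fixes \<xi> \<xi>' :: "nat \<Rightarrow> complex"
  assumes "prime p" "odd p" "0 < b" "b < p"
    and "\<And>i. i < p \<Longrightarrow> \<xi> i \<noteq> 0" "(\<Prod>i<p. \<xi> i) = 1" "(\<Prod>i<p. \<xi>' i) = 1"
    and comm: "monomial_mat p \<xi> b * monomial_mat p \<xi>' b'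
      = omega p ^ c \<cdot>\<^sub>m (monomial_mat p \<xi>' b' * monomial_mat p \<xi> b)"
  shows "\<exists>a0 a1. a0 < p \<and> a1 < p \<and>
    monomial_mat p \<xi>' b'
      = Smat p (\<lambda>q. omega p ^ (a0 + a1 * q)) * monomial_mat p \<xi> b ^\<^sub>m zdiv p b' b \<and>
    [int c = - (int b * int a1)] (mod int p)"
proof -
  have "coprime b p"
    using assms(1,3,4) by (metis coprime_commute nat_dvd_not_less prime_imp_coprime)
  moreover have "omega p ^ 0 \<cdot>\<^sub>m (monomial_mat p \<xi> b * monomial_mat p \<xi>' b')
      = omega p ^ c \<cdot>\<^sub>m (monomial_mat p \<xi>' b' * monomial_mat p \<xi> b)"
    using comm by (simp add: monomial_mat_mult smult_monomial_mat)
  ultimately obtain a0 a1 where "a0 < p" "a1 < p"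
      "monomial_mat p \<xi>' b'
        = Smat p (\<lambda>q. omega p ^ (a0 + a1 * q)) * monomial_mat p \<xi> b ^\<^sub>m zdiv p b' b"
      "[int b * int a1 = int 0 - int c] (mod int p)"
    using phase_commuting_monomial_factor[OF \<open>odd p\<close> _ assms(5-7)] by blast
  then show ?thesis by (auto simp: cong_iff_dvd_diff add.commute)
qed

lemma phase_commuting_first_factor:
  fixes \<xi> \<xi>' :: "nat \<Rightarrow> complex"
  assumes "prime p" "odd p" "0 < b'" "b' < p"
    and "\<And>i. i < p \<Longrightarrow> \<xi>' i \<noteq> 0" "(\<Prod>i<p. \<xi>' i) = 1" "(\<Prod>i<p. \<xi> i) = 1"
    and comm: "monomial_mat p \<xi> b * monomial_mat p \<xi>' b'
      = omega p ^ c \<cdot>\<^sub>m (monomial_mat p \<xi>' b' * monomial_mat p \<xi> b)"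
  shows "\<exists>a0 a1. a0 < p \<and> a1 < p \<and>
    monomial_mat p \<xi> b
      = Smat p (\<lambda>q. omega p ^ (a0 + a1 * q)) * monomial_mat p \<xi>' b' ^\<^sub>m zdiv p b b' \<and>
    [int c = int b' * int a1] (mod int p)"
proof -
  have "coprime b' p"
    using assms(1,3,4) by (metis coprime_commute nat_dvd_not_less prime_imp_coprime)
  moreover have "omega p ^ c \<cdot>\<^sub>m (monomial_mat p \<xi>' b' * monomial_mat p \<xi> b)
      = omega p ^ 0 \<cdot>\<^sub>m (monomial_mat p \<xi> b * monomial_mat p \<xi>' b')"
    using comm by (simp add: monomial_mat_mult smult_monomial_mat)
  ultimately obtain a0 a1 where "a0 < p" "a1 < p"
      "monomial_mat p \<xi> b
        = Smat p (\<lambda>q. omega p ^ (a0 + a1 * q)) * monomial_mat p \<xi>' b' ^\<^sub>m zdiv p b b'"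
      "[int b' * int a1 = int c - int 0] (mod int p)"
    using phase_commuting_monomial_factor[OF \<open>odd p\<close> _ assms(5-7)] by blast
  then show ?thesis by (auto simp: cong_sym_eq)
qed

theorem corollary2:
  fixes p m b b' c :: nat and \<xi> \<xi>' :: "nat \<Rightarrow> complex" and M M' :: "complex mat"
  assumes "prime p" and "odd p" and "m \<ge> 1"
    and "Smat p \<xi> \<in> T_tors p (p ^ m)" and "Smat p \<xi>' \<in> T_tors p (p ^ m)"
    and "b < p" and "b' < p" and "c < p"
    and "M = Smat p \<xi> * Xmat p ^\<^sub>m b" and "M' = Smat p \<xi>' * Xmat p ^\<^sub>m b'"
    and "M \<in> K_grp p (T_tors p (p ^ m))" and "M' \<in> K_grp p (T_tors p (p ^ m))"
    and "commutator p M M' = omega p ^ c \<cdot>\<^sub>m 1\<^sub>m p"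
  shows "(b = 0 \<and> b' = 0 \<longrightarrow> c = 0)
    \<and> (b \<noteq> 0 \<longrightarrow> (\<exists>a0 a1. a0 < p \<and> a1 < p \<and>
           M' = Smat p (\<lambda>q. omega p ^ (a0 + a1 * q)) * M ^\<^sub>m zdiv p b' b \<and>
           [int c = - (int b * int a1)] (mod int p)))
    \<and> (b' \<noteq> 0 \<longrightarrow> (\<exists>a0 a1. a0 < p \<and> a1 < p \<and>
           M = Smat p (\<lambda>q. omega p ^ (a0 + a1 * q)) * M' ^\<^sub>m zdiv p b b' \<and>
           [int c = int b' * int a1] (mod int p)))"
proof -
  have p: "0 < p" using \<open>prime p\<close> by (simp add: prime_gt_0_nat)
  have \<xi>: "\<forall>i<p. \<xi> i \<noteq> 0" "(\<Prod>i<p. \<xi> i) = 1"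
    using Smat_in_T_setD assms(4) by (auto simp: T_tors_def)
  have \<xi>': "\<forall>i<p. \<xi>' i \<noteq> 0" "(\<Prod>i<p. \<xi>' i) = 1"
    using Smat_in_T_setD assms(5) by (auto simp: T_tors_def)
  have M: "M = monomial_mat p \<xi> b" "M' = monomial_mat p \<xi>' b'"
    by (simp_all add: assms(9,10) Smat_mult_Xmat_pow)
  have comm: "monomial_mat p \<xi> b * monomial_mat p \<xi>' b'
      = omega p ^ c \<cdot>\<^sub>m (monomial_mat p \<xi>' b' * monomial_mat p \<xi> b)"
    using commutator_eq_smult_oneD[OF _ _ monomial_mat_right_inverse _ _ monomial_mat_right_inverse]
      p \<xi>(1) \<xi>'(1) assms(13) by (simp add: M)
  show ?thesis
    using phase_commuting_diagonal[where \<xi> = \<xi> and \<xi>' = \<xi>',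
        OF p \<open>c < p\<close> \<xi>(1)[rule_format, OF p] \<xi>'(1)[rule_format, OF p]]
      phase_commuting_second_factor[OF \<open>prime p\<close> \<open>odd p\<close> _ \<open>b < p\<close>
        \<xi>(1)[rule_format] \<xi>(2) \<xi>'(2) comm]
      phase_commuting_first_factor[OF \<open>prime p\<close> \<open>odd p\<close> _ \<open>b' < p\<close>
        \<xi>'(1)[rule_format] \<xi>'(2) \<xi>(2) comm]
      comm unfolding M by auto
qed

end
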